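(* For every nonnegative Borel $f$ on $\mathbb R$, every $t>0$ and $\delta\in\mathbb R$, $$U_{1,f}(t,\sqrt{2\alpha}\delta t)\le\begin{cases}e^{-qt},&\delta\ge0,\\ \frac{1}{2\sqrt{\pi\alpha}|\delta|}t^{-1/2}e^{-(q+\alpha\delta^2)t},&\delta<0,\end{cases}$$ where $U_{1,f}(t,x)=\mathrm E\big[e^{-\int_0^t\psi'(\lambda^*+u^*_f(t-r,x-B_r))dr};\,B_t\le x\big]$.
   Context: $B$ is a standard Brownian motion started at $0$ under $\mathrm P$. Let $\alpha>0$, $\beta\ge0$, $n$ a $\sigma$-finite measure on $(0,\infty)$ with $\int(y^2\wedge y)n(dy)<\infty$, $\psi(\lambda)=-\alpha\lambda+\beta\lambda^2+\int_0^\infty(e^{-\lambda y}-1+\lambda y)n(dy)$ with $\psi(\lambda)\to\infty$. $X$ is a super-Brownian motion on $\mathbb R$ with branching mechanism $\psi$; $\lambda^*>0$ is the largest root of $\psi=0$, $q=\psi'(\lambda^* )$. $M_t=\sup\{x:X_t((x,\infty))>0\}$. $\mathbb P^*$ is the law of $X$ started from $\delta_0$ conditioned on extinction, and $u^*_f(t,x)=-\log\mathbb E^*(e^{-\int f(y-x)X_t(dy)};M_t\le x)$. *)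

theory Defs
  imports "HOL-Probability.Probability"
begin

definition psi :: "real \<Rightarrow> real \<Rightarrow> real measure \<Rightarrow> real \<Rightarrow> real" where
  "psi a b n l = - a * l + b * l\<^sup>2 +
     enn2real (\<integral>\<^sup>+ y\<in>{0<..}. ennreal (exp (- l * y) - 1 + l * y) \<partial>n)"

definition std_bm :: "'w measure \<Rightarrow> (real \<Rightarrow> 'w \<Rightarrow> real) \<Rightarrow> bool" where
  "std_bm P B \<longleftrightarrow> prob_space P \<and>
     (\<forall>t. B t \<in> borel_measurable P) \<and>
     (\<forall>\<omega>\<in>space P. B 0 \<omega> = 0 \<and> continuous_on {0..} (\<lambda>t. B t \<omega>)) \<and>
     (\<forall>s t. 0 \<le> s \<and> s < t \<longrightarrow>
        distributed P lborel (\<lambda>\<omega>. B t \<omega> - B s \<omega>) (normal_density 0 (sqrt (t - s)))) \<and>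
     (\<forall>ts. sorted ts \<and> (\<forall>x\<in>set ts. 0 \<le> x) \<longrightarrow>
        prob_space.indep_vars P (\<lambda>_. borel)
          (\<lambda>i \<omega>. B (ts ! Suc i) \<omega> - B (ts ! i) \<omega>) {..<length ts - 1})"

definition exp_neg :: "ennreal \<Rightarrow> ennreal" where
  "exp_neg z = (if z = \<top> then 0 else ennreal (exp (- enn2real z)))"

text \<open>M = sup { x : mu((x,inf)) > 0 } (= -inf for the zero measure).\<close>
definition sup_support :: "real measure \<Rightarrow> ereal" where
  "sup_support \<mu> = Sup {ereal x | x. emeasure \<mu> {x<..} > 0}"

definition ustar :: "'v measure \<Rightarrow> (real \<Rightarrow> 'v \<Rightarrow> real measure) \<Rightarrow> (real \<Rightarrow> real)
     \<Rightarrow> real \<Rightarrow> real \<Rightarrow> ereal" where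
  "ustar Ps X f t x =
    (let w = \<integral>\<^sup>+ \<omega>. exp_neg (\<integral>\<^sup>+ y. ennreal (f (y - x)) \<partial>(X t \<omega>))
                 * indicator {\<omega>\<in>space Ps. sup_support (X t \<omega>) \<le> ereal x} \<omega> \<partial>Ps
     in if w = 0 then \<infinity> else ereal (- ln (enn2real w)))"

definition rate :: "(real \<Rightarrow> real) \<Rightarrow> real \<Rightarrow> ereal \<Rightarrow> ennreal" where
  "rate dpsi lam u = (if u = \<infinity> then \<top> else ennreal (dpsi (lam + real_of_ereal u)))"

definition U1 :: "'w measure \<Rightarrow> (real \<Rightarrow> 'w \<Rightarrow> real) \<Rightarrow> (real \<Rightarrow> real) \<Rightarrow> real
     \<Rightarrow> (real \<Rightarrow> real \<Rightarrow> ereal) \<Rightarrow> real \<Rightarrow> real \<Rightarrow> ennreal" where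
  "U1 P B dpsi lam u t x =
    \<integral>\<^sup>+ \<omega>. exp_neg (\<integral>\<^sup>+ r\<in>{0..t}. rate dpsi lam (u (t - r) (x - B r \<omega>)) \<partial>lborel)
          * indicator {\<omega>\<in>space P. B t \<omega> \<le> x} \<omega> \<partial>P"

end

(* Since b >= 0 and y (1 - exp (- l y)) is nondecreasing in l, the derivative
   psi'(l) = - a + 2 b l + int y (1 - exp (- l y)) n(dy) is nondecreasing on (0, inf);
   differentiating under the integral is justified because the second-order remainder of
   the integrand is dominated by d^2 min (y^2, y).  As ustar >= 0, the rate
   psi'(lam + ustar) in U_{1,f} is at least q = psi'(lam), so
   U_{1,f}(t, x) <= exp (- q t) P(B_t <= x).  For delta >= 0 the probability is at most 1;
   for delta < 0 the Gaussian tail bound P(B_t <= x) <= t / |x| * phi_t(x) with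
   x = sqrt (2 alpha) delta t gives the claim. *)

theory Submission
  imports Defs "HOL-Real_Asymp.Real_Asymp"
begin

lemma exp_minus_one_minus_bounds:
  fixes x :: real
  shows "0 \<le> exp x - 1 - x" and "exp x - 1 - x \<le> x\<^sup>2 * exp \<bar>x\<bar> / 2"
proof -
  obtain s where "\<bar>s\<bar> \<le> \<bar>x\<bar>" and s: "exp x = (\<Sum>m<2. x ^ m / fact m) + exp s / fact 2 * x ^ 2"
    using Maclaurin_exp_le[of x 2] by blast
  then have "exp s \<le> exp \<bar>x\<bar>" by simp
  moreover have "exp x - 1 - x = exp s / 2 * x\<^sup>2" using s by (simp add: numeral_2_eq_2)
  ultimately show "0 \<le> exp x - 1 - x" "exp x - 1 - x \<le> x\<^sup>2 * exp \<bar>x\<bar> / 2"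
    by (auto intro: mult_right_mono simp: field_simps)
qed

lemma sq_mult_exp_neg_le_min:
  fixes c y :: real
  assumes "c > 0" "y > 0"
  shows "y\<^sup>2 * exp (- c * y) \<le> max 1 (1 / c) * min (y\<^sup>2) y"
proof (cases "y \<le> 1")
  case True
  then have "min (y\<^sup>2) y = y\<^sup>2" using assms by (simp add: power2_eq_square)
  moreover have "exp (- c * y) \<le> max 1 (1 / c)"
    using assms by (intro order_trans[OF _ max.cobounded1]) simp
  then have "y\<^sup>2 * exp (- c * y) \<le> y\<^sup>2 * max 1 (1 / c)" by (rule mult_left_mono) simp
  ultimately show ?thesis by (simp add: mult.commute)
next
  case False
  have "c * y \<le> exp (c * y)" using exp_ge_add_one_self[of "c * y"] by linarith
  then have "c * y * exp (- c * y) \<le> 1" by (simp add: exp_minus field_simps)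
  then have "y * exp (- c * y) \<le> 1 / c" using assms by (simp add: field_simps)
  then have "y * exp (- c * y) \<le> max 1 (1 / c)" by (rule order_trans) simp
  then have "y * (y * exp (- c * y)) \<le> y * max 1 (1 / c)" using assms by (simp add: mult_left_mono)
  moreover have "min (y\<^sup>2) y = y" using False by (simp add: power2_eq_square)
  ultimately show ?thesis by (simp add: power2_eq_square mult_ac)
qed

lemma exp_neg_minus_one_plus_le_min:
  fixes l y :: real
  assumes "l \<ge> 0" "y > 0"
  shows "exp (- l * y) - 1 + l * y \<le> max (l\<^sup>2 * exp l) l * min (y\<^sup>2) y"
proof (cases "y \<le> 1")
  case True
  have "exp (- l * y) - 1 + l * y \<le> (l * y)\<^sup>2 * exp \<bar>l * y\<bar> / 2"
    using exp_minus_one_minus_bounds(2)[of "- l * y"] by simp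
  also have "\<dots> \<le> (l * y)\<^sup>2 * exp l"
  proof -
    have "exp \<bar>l * y\<bar> \<le> exp l" using assms True by (simp add: abs_mult mult_left_le)
    then have "(l * y)\<^sup>2 * exp \<bar>l * y\<bar> \<le> (l * y)\<^sup>2 * exp l" by (rule mult_left_mono) simp
    moreover have "0 \<le> (l * y)\<^sup>2 * exp \<bar>l * y\<bar>" by simp
    ultimately show ?thesis by linarith
  qed
  also have "\<dots> = (l\<^sup>2 * exp l) * y\<^sup>2" by (simp add: power_mult_distrib)
  also have "\<dots> \<le> max (l\<^sup>2 * exp l) l * y\<^sup>2" by (intro mult_right_mono) simp_all
  finally show ?thesis using True assms by (simp add: power2_eq_square)
next
  case False
  have "exp (- l * y) - 1 + l * y \<le> l * y" using assms by simp
  also have "\<dots> \<le> max (l\<^sup>2 * exp l) l * y" using assms by (simp add: mult_right_mono)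
  finally show ?thesis using False by (simp add: power2_eq_square)
qed

lemma mult_one_minus_exp_neg_le_min:
  fixes l y :: real
  assumes "l \<ge> 0" "y > 0"
  shows "y * (1 - exp (- l * y)) \<le> max l 1 * min (y\<^sup>2) y"
proof (cases "y \<le> 1")
  case True
  have "1 - exp (- l * y) \<le> l * y" using exp_ge_add_one_self[of "- l * y"] by linarith
  then have "y * (1 - exp (- l * y)) \<le> l * y\<^sup>2" using assms by (simp add: mult_left_mono power2_eq_square mult_ac)
  also have "\<dots> \<le> max l 1 * y\<^sup>2" by (simp add: mult_right_mono)
  finally show ?thesis using True assms by (simp add: power2_eq_square)
next
  case False
  have "1 - exp (- l * y) \<le> max l 1" using exp_gt_zero[of "- l * y"] by (auto simp: le_max_iff_disj)
  then have "y * (1 - exp (- l * y)) \<le> y * max l 1" using assms by (intro mult_left_mono) auto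
  then show ?thesis using False by (simp add: power2_eq_square mult.commute)
qed

lemma exp_neg_remainder_le_min:
  fixes l d y :: real
  assumes "l > 0" "y > 0" "\<bar>d\<bar> \<le> l / 2"
  shows "\<bar>exp (- l * y) * (exp (- d * y) - 1 + d * y)\<bar> \<le> d\<^sup>2 * (max 1 (2 / l) * min (y\<^sup>2) y)"
proof -
  have "0 \<le> exp (- d * y) - 1 + d * y"
    using exp_minus_one_minus_bounds(1)[of "- d * y"] by simp
  then have "\<bar>exp (- l * y) * (exp (- d * y) - 1 + d * y)\<bar>
      \<le> exp (- l * y) * ((d * y)\<^sup>2 * exp \<bar>d * y\<bar> / 2)"
    using exp_minus_one_minus_bounds(2)[of "- d * y"] by simp
  also have "\<dots> = d\<^sup>2 * (y\<^sup>2 * (exp (- l * y) * exp (\<bar>d\<bar> * y))) / 2"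
    using assms by (simp add: power_mult_distrib abs_mult)
  also have "\<dots> = d\<^sup>2 * (y\<^sup>2 * exp (- l * y + \<bar>d\<bar> * y)) / 2"
    by (simp only: exp_add)
  also have "\<dots> \<le> d\<^sup>2 * (y\<^sup>2 * exp (- (l / 2) * y))"
  proof -
    have "- l * y + \<bar>d\<bar> * y \<le> - (l / 2) * y" using assms by (simp add: algebra_simps mult_right_mono)
    then have "d\<^sup>2 * (y\<^sup>2 * exp (- l * y + \<bar>d\<bar> * y)) \<le> d\<^sup>2 * (y\<^sup>2 * exp (- (l / 2) * y))"
      by (intro mult_left_mono) simp_all
    moreover have "0 \<le> d\<^sup>2 * (y\<^sup>2 * exp (- l * y + \<bar>d\<bar> * y))" by simp
    ultimately show ?thesis by linarith
  qed
  also have "\<dots> \<le> d\<^sup>2 * (max 1 (2 / l) * min (y\<^sup>2) y)"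
    using sq_mult_exp_neg_le_min[of "l / 2" y] assms by (simp add: mult_left_mono)
  finally show ?thesis .
qed

locale levy_measure =
  fixes n :: "real measure"
  assumes sets_eq [measurable_cong]: "sets n = sets borel"
    and nn_integral_min_sq_finite: "(\<integral>\<^sup>+ y\<in>{0<..}. ennreal (min (y\<^sup>2) y) \<partial>n) < \<infinity>"
begin

definition jump_part :: "real \<Rightarrow> real" where
  "jump_part l = (\<integral>y. indicator {0<..} y * (exp (- l * y) - 1 + l * y) \<partial>n)"

definition jump_part_deriv :: "real \<Rightarrow> real" where
  "jump_part_deriv l = (\<integral>y. indicator {0<..} y * (y * (1 - exp (- l * y))) \<partial>n)"

lemma integrable_min_sq: "integrable n (\<lambda>y. indicator {0<..} y * min (y\<^sup>2) y)"
proof (rule integrableI_nonneg)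
  show "AE y in n. 0 \<le> indicator {0<..} y * min (y\<^sup>2) y"
    by (auto simp: split: split_indicator)
  have "(\<integral>\<^sup>+ y. ennreal (indicator {0<..} y * min (y\<^sup>2) y) \<partial>n)
      = (\<integral>\<^sup>+ y\<in>{0<..}. ennreal (min (y\<^sup>2) y) \<partial>n)"
    by (intro nn_integral_cong) (simp split: split_indicator)
  then show "(\<integral>\<^sup>+ y. ennreal (indicator {0<..} y * min (y\<^sup>2) y) \<partial>n) < \<infinity>"
    using nn_integral_min_sq_finite by simp
qed simp

lemma integrable_dominated_by_min_sq:
  assumes "f \<in> borel_measurable borel" and "\<And>y. y > 0 \<Longrightarrow> \<bar>f y\<bar> \<le> C * min (y\<^sup>2) y"
  shows "integrable n (\<lambda>y. indicator {0<..} y * f y)"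
proof (rule Bochner_Integration.integrable_bound)
  have [measurable]: "f \<in> borel_measurable borel" by fact
  show "integrable n (\<lambda>y. C * (indicator {0<..} y * min (y\<^sup>2) y))"
    using integrable_min_sq by simp
  show "(\<lambda>y. indicator {0<..} y * f y) \<in> borel_measurable n" by measurable
  show "AE y in n. norm (indicator {0<..} y * f y) \<le> norm (C * (indicator {0<..} y * min (y\<^sup>2) y))"
    using assms(2) by (intro AE_I2) (auto split: split_indicator intro: order_trans[OF _ abs_ge_self])
qed

lemma integrable_jump_integrand:
  "l \<ge> 0 \<Longrightarrow> integrable n (\<lambda>y. indicator {0<..} y * (exp (- l * y) - 1 + l * y))"
  using exp_neg_minus_one_plus_le_min exp_minus_one_minus_bounds(1)[of "- l * _"]
  by (intro integrable_dominated_by_min_sq) auto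

lemma integrable_jump_deriv_integrand:
  "l \<ge> 0 \<Longrightarrow> integrable n (\<lambda>y. indicator {0<..} y * (y * (1 - exp (- l * y))))"
  using mult_one_minus_exp_neg_le_min
  by (intro integrable_dominated_by_min_sq) (auto simp: mult_nonneg_nonneg)

lemma psi_eq_jump_part: "psi a b n l = - a * l + b * l\<^sup>2 + jump_part l"
proof -
  have "jump_part l = enn2real (\<integral>\<^sup>+ y. ennreal (indicator {0<..} y * (exp (- l * y) - 1 + l * y)) \<partial>n)"
    unfolding jump_part_def using exp_minus_one_minus_bounds(1)[of "- l * _"]
    by (intro integral_eq_nn_integral AE_I2) (auto split: split_indicator)
  also have "\<dots> = enn2real (\<integral>\<^sup>+ y\<in>{0<..}. ennreal (exp (- l * y) - 1 + l * y) \<partial>n)"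
    by (intro arg_cong[where f = enn2real] nn_integral_cong) (simp split: split_indicator)
  finally show ?thesis unfolding psi_def by simp
qed

lemma jump_part_remainder_le:
  assumes "l > 0" and "\<bar>d\<bar> \<le> l / 2"
  shows "\<bar>jump_part (l + d) - jump_part l - d * jump_part_deriv l\<bar>
    \<le> d\<^sup>2 * (max 1 (2 / l) * (\<integral>y. indicator {0<..} y * min (y\<^sup>2) y \<partial>n))"
proof -
  have "l + d \<ge> 0" using assms by linarith
  then have "jump_part (l + d) - jump_part l - d * jump_part_deriv l
      = (\<integral>y. indicator {0<..} y * (exp (- (l + d) * y) - 1 + (l + d) * y)
           - indicator {0<..} y * (exp (- l * y) - 1 + l * y)
           - d * (indicator {0<..} y * (y * (1 - exp (- l * y)))) \<partial>n)"
    unfolding jump_part_def jump_part_deriv_def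
    using integrable_jump_integrand[OF \<open>l + d \<ge> 0\<close>] integrable_jump_integrand[of l]
      integrable_jump_deriv_integrand[of l] assms(1)
    by simp
  also have "\<dots> = (\<integral>y. indicator {0<..} y * (exp (- l * y) * (exp (- d * y) - 1 + d * y)) \<partial>n)"
  proof (intro Bochner_Integration.integral_cong refl)
    fix y
    have "exp (- (l + d) * y) = exp (- l * y) * exp (- d * y)"
      by (simp add: exp_add[symmetric] algebra_simps)
    then show "indicator {0<..} y * (exp (- (l + d) * y) - 1 + (l + d) * y)
           - indicator {0<..} y * (exp (- l * y) - 1 + l * y)
           - d * (indicator {0<..} y * (y * (1 - exp (- l * y))))
        = indicator {0<..} y * (exp (- l * y) * (exp (- d * y) - 1 + d * y))"
      by (simp add: algebra_simps)
  qed
  also have "\<bar>\<dots>\<bar> \<le> (\<integral>y. d\<^sup>2 * (max 1 (2 / l) * (indicator {0<..} y * min (y\<^sup>2) y)) \<partial>n)"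
  proof (rule integral_abs_bound_integral)
    show "integrable n (\<lambda>y. indicator {0<..} y * (exp (- l * y) * (exp (- d * y) - 1 + d * y)))"
      using exp_neg_remainder_le_min[OF assms(1) _ assms(2)]
      by (intro integrable_dominated_by_min_sq[where C = "d\<^sup>2 * max 1 (2 / l)"]) (auto simp: mult_ac)
    show "integrable n (\<lambda>y. d\<^sup>2 * (max 1 (2 / l) * (indicator {0<..} y * min (y\<^sup>2) y)))"
      using integrable_min_sq by simp
  qed (use exp_neg_remainder_le_min[OF assms(1) _ assms(2)] in \<open>auto split: split_indicator\<close>)
  finally show ?thesis by simp
qed

lemma jump_part_has_real_derivative:
  assumes "l > 0"
  shows "(jump_part has_real_derivative jump_part_deriv l) (at l)"
proof -
  define K where "K = max 1 (2 / l) * (\<integral>y. indicator {0<..} y * min (y\<^sup>2) y \<partial>n)"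
  have "norm ((jump_part (l + d) - jump_part l) / d - jump_part_deriv l) \<le> \<bar>d\<bar> * K"
    if "d \<noteq> 0" "\<bar>d\<bar> \<le> l / 2" for d
  proof -
    have "(jump_part (l + d) - jump_part l) / d - jump_part_deriv l
        = (jump_part (l + d) - jump_part l - d * jump_part_deriv l) / d"
      using \<open>d \<noteq> 0\<close> by (simp add: field_simps)
    then show ?thesis
      using jump_part_remainder_le[OF assms that(2)] \<open>d \<noteq> 0\<close>
      by (simp add: K_def abs_divide divide_le_eq power2_eq_square abs_mult mult_ac)
  qed
  then have "\<forall>\<^sub>F d in at 0. norm ((jump_part (l + d) - jump_part l) / d - jump_part_deriv l) \<le> \<bar>d\<bar> * K"
    unfolding eventually_at using assms by (intro exI[of _ "l / 2"]) (auto simp: dist_real_def)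
  moreover have "((\<lambda>d. \<bar>d\<bar> * K) \<longlongrightarrow> 0) (at 0)"
    by (intro tendsto_eq_intros) auto
  ultimately show ?thesis
    unfolding DERIV_def by (subst LIM_zero_iff[symmetric]) (rule Lim_null_comparison)
qed

lemma psi_has_real_derivative:
  "l > 0 \<Longrightarrow> (psi a b n has_real_derivative - a + 2 * b * l + jump_part_deriv l) (at l)"
  unfolding psi_eq_jump_part[abs_def]
  by (rule derivative_eq_intros jump_part_has_real_derivative refl | simp)+

lemma jump_part_deriv_mono:
  assumes "0 \<le> l" "l \<le> l'"
  shows "jump_part_deriv l \<le> jump_part_deriv l'"
  unfolding jump_part_deriv_def
proof (rule integral_mono)
  show "integrable n (\<lambda>y. indicator {0<..} y * (y * (1 - exp (- l * y))))"
    "integrable n (\<lambda>y. indicator {0<..} y * (y * (1 - exp (- l' * y))))"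
    using assms by (intro integrable_jump_deriv_integrand; simp)+
  fix y :: real
  have "y > 0 \<Longrightarrow> exp (- l' * y) \<le> exp (- l * y)" using assms(2) by (simp add: mult_right_mono)
  then show "indicator {0<..} y * (y * (1 - exp (- l * y))) \<le> indicator {0<..} y * (y * (1 - exp (- l' * y)))"
    by (auto simp: mult_left_mono split: split_indicator)
qed

lemma deriv_psi_mono:
  assumes "b \<ge> 0" "0 < l" "l \<le> l'"
  shows "deriv (psi a b n) l \<le> deriv (psi a b n) l'"
proof -
  have "b * l \<le> b * l'" using assms by (simp add: mult_left_mono)
  then show ?thesis
    using jump_part_deriv_mono[of l l'] assms
      DERIV_imp_deriv[OF psi_has_real_derivative[of l]] DERIV_imp_deriv[OF psi_has_real_derivative[of l']]
    by simp
qed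

end

lemma exp_neg_le_one: "exp_neg z \<le> 1"
  by (simp add: exp_neg_def)

lemma exp_neg_le_exp:
  assumes "0 \<le> c" and "ennreal c \<le> z"
  shows "exp_neg z \<le> ennreal (exp (- c))"
proof (cases "z = \<top>")
  case False
  then have "c \<le> enn2real z"
    using assms enn2real_mono[OF assms(2)] by (simp add: top.not_eq_extremum)
  then show ?thesis using False by (simp add: exp_neg_def)
qed (simp add: exp_neg_def)

lemma exp_neg_nn_integral_le:
  fixes g :: "real \<Rightarrow> ennreal"
  assumes "0 \<le> t" and "\<And>r. ennreal c \<le> g r"
  shows "exp_neg (\<integral>\<^sup>+ r\<in>{0..t}. g r \<partial>lborel) \<le> ennreal (exp (- c * t))"
proof (cases "c \<le> 0")
  case True
  then have "1 \<le> ennreal (exp (- c * t))" using assms(1) by (simp add: mult_nonpos_nonneg)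
  then show ?thesis using exp_neg_le_one order_trans by blast
next
  case False
  have "ennreal (c * t) = (\<integral>\<^sup>+ r. ennreal c * indicator {0..t} r \<partial>lborel)"
    using assms(1) False by (simp add: nn_integral_cmult_indicator ennreal_mult)
  also have "\<dots> \<le> (\<integral>\<^sup>+ r\<in>{0..t}. g r \<partial>lborel)"
    using assms(2) by (intro nn_integral_mono) (simp split: split_indicator)
  finally show ?thesis using False assms(1) exp_neg_le_exp[of "c * t"] by simp
qed

lemma ustar_nonneg:
  assumes "prob_space Ps"
  shows "0 \<le> ustar Ps X f s z"
proof -
  interpret prob_space Ps by fact
  define w where "w = (\<integral>\<^sup>+ \<omega>. exp_neg (\<integral>\<^sup>+ y. ennreal (f (y - z)) \<partial>(X s \<omega>))
      * indicator {\<omega>\<in>space Ps. sup_support (X s \<omega>) \<le> ereal z} \<omega> \<partial>Ps)"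
  have "w \<le> (\<integral>\<^sup>+ \<omega>. 1 \<partial>Ps)" unfolding w_def
    by (intro nn_integral_mono) (auto simp: exp_neg_le_one split: split_indicator)
  then have "w \<le> 1" by (simp add: emeasure_space_1)
  show ?thesis
  proof (cases "w = 0")
    case False
    with \<open>w \<le> 1\<close> have "0 < enn2real w" and "enn2real w \<le> 1"
      by (auto simp: enn2real_positive_iff top.not_eq_extremum zero_less_iff_neq_zero
          intro: order_le_less_trans enn2real_leI)
    then show ?thesis using False by (simp add: ustar_def w_def[symmetric] Let_def)
  qed (simp add: ustar_def w_def[symmetric] Let_def)
qed

lemma ennreal_le_rate:
  assumes "\<And>v. 0 \<le> v \<Longrightarrow> c \<le> dpsi (lam + v)" and "0 \<le> u"
  shows "ennreal c \<le> rate dpsi lam u"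
  using assms by (cases u) (auto simp: rate_def ennreal_leI)

lemma U1_le_exp_emeasure:
  assumes "std_bm P B" and "0 \<le> t" and "\<And>s z. ennreal c \<le> rate dpsi lam (u s z)"
  shows "U1 P B dpsi lam u t x \<le> ennreal (exp (- c * t)) * emeasure P {\<omega>\<in>space P. B t \<omega> \<le> x}"
proof -
  have [measurable]: "B t \<in> borel_measurable P" using assms(1) by (simp add: std_bm_def)
  have "U1 P B dpsi lam u t x
      \<le> (\<integral>\<^sup>+ \<omega>. ennreal (exp (- c * t)) * indicator {\<omega>\<in>space P. B t \<omega> \<le> x} \<omega> \<partial>P)"
    unfolding U1_def using assms(2,3) by (intro nn_integral_mono mult_right_mono exp_neg_nn_integral_le) auto
  also have "\<dots> = ennreal (exp (- c * t)) * emeasure P {\<omega>\<in>space P. B t \<omega> \<le> x}"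
    by (rule nn_integral_cmult_indicator) measurable
  finally show ?thesis .
qed

lemma std_bm_emeasure_le_eq:
  assumes "std_bm P B" and "0 < t"
  shows "emeasure P {\<omega>\<in>space P. B t \<omega> \<le> x}
    = (\<integral>\<^sup>+ y. ennreal (normal_density 0 (sqrt t) y) * indicator {..x} y \<partial>lborel)"
proof -
  have B0: "\<forall>\<omega>\<in>space P. B 0 \<omega> = 0"
    and increments: "\<forall>s t. 0 \<le> s \<and> s < t \<longrightarrow>
      distributed P lborel (\<lambda>\<omega>. B t \<omega> - B s \<omega>) (normal_density 0 (sqrt (t - s)))"
    using assms(1) unfolding std_bm_def by blast+
  have dist: "distributed P lborel (\<lambda>\<omega>. B t \<omega> - B 0 \<omega>) (normal_density 0 (sqrt t))"
    using increments[rule_format, of 0 t] assms(2) by simp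
  have "{\<omega>\<in>space P. B t \<omega> \<le> x} = (\<lambda>\<omega>. B t \<omega> - B 0 \<omega>) -` {..x} \<inter> space P"
    using B0 by auto
  then show ?thesis by (simp add: distributed_emeasure[OF dist])
qed

lemma nn_integral_normal_density_upper_tail_le:
  assumes "0 < \<sigma>" and "0 < x"
  shows "(\<integral>\<^sup>+ y\<in>{x..}. ennreal (normal_density 0 \<sigma> y) \<partial>lborel) \<le> ennreal (\<sigma>\<^sup>2 / x * normal_density 0 \<sigma> x)"
proof -
  have "(\<integral>\<^sup>+ y\<in>{x..}. ennreal (normal_density 0 \<sigma> y) \<partial>lborel)
      \<le> (\<integral>\<^sup>+ y\<in>{x..}. ennreal (y / x * normal_density 0 \<sigma> y) \<partial>lborel)"
  proof (intro nn_integral_mono)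
    fix y
    have "x \<le> y \<Longrightarrow> normal_density 0 \<sigma> y \<le> y / x * normal_density 0 \<sigma> y"
      using assms mult_right_mono[of 1 "y / x" "normal_density 0 \<sigma> y"] by simp
    then show "ennreal (normal_density 0 \<sigma> y) * indicator {x..} y
        \<le> ennreal (y / x * normal_density 0 \<sigma> y) * indicator {x..} y"
      by (simp add: ennreal_leI split: split_indicator)
  qed
  also have "\<dots> = ennreal (0 - (- \<sigma>\<^sup>2 / x * normal_density 0 \<sigma> x))"
  proof (rule nn_integral_FTC_atLeast[where F = "\<lambda>y. - \<sigma>\<^sup>2 / x * normal_density 0 \<sigma> y" and T = 0])
    fix y assume "x \<le> y"
    then show "0 \<le> y / x * normal_density 0 \<sigma> y" using assms by simp
    show "((\<lambda>y. - \<sigma>\<^sup>2 / x * normal_density 0 \<sigma> y) has_real_derivative y / x * normal_density 0 \<sigma> y) (at y)"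
      unfolding normal_density_def using assms
      by (auto intro!: derivative_eq_intros simp: field_simps power2_eq_square)
  next
    show "((\<lambda>y. - \<sigma>\<^sup>2 / x * normal_density 0 \<sigma> y) \<longlongrightarrow> 0) at_top"
      unfolding normal_density_def using assms by real_asymp
  qed simp
  finally show ?thesis by simp
qed

lemma nn_integral_normal_density_lower_tail_le:
  assumes "0 < \<sigma>" and "x < 0"
  shows "(\<integral>\<^sup>+ y. ennreal (normal_density 0 \<sigma> y) * indicator {..x} y \<partial>lborel)
    \<le> ennreal (\<sigma>\<^sup>2 / (- x) * normal_density 0 \<sigma> x)"
proof -
  have "(\<integral>\<^sup>+ y. ennreal (normal_density 0 \<sigma> y) * indicator {..x} y \<partial>lborel)
      = (\<integral>\<^sup>+ y\<in>{- x..}. ennreal (normal_density 0 \<sigma> y) \<partial>lborel)"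
    by (subst nn_integral_real_affine[where c = "- 1" and t = 0])
      (auto intro!: nn_integral_cong simp: normal_density_def split: split_indicator)
  also have "\<dots> \<le> ennreal (\<sigma>\<^sup>2 / (- x) * normal_density 0 \<sigma> (- x))"
    using assms by (intro nn_integral_normal_density_upper_tail_le) auto
  finally show ?thesis by (simp add: normal_density_def)
qed

lemma U1_le_exp:
  assumes "std_bm P B" and "0 \<le> t" and "\<And>s z. ennreal c \<le> rate dpsi lam (u s z)"
  shows "U1 P B dpsi lam u t x \<le> ennreal (exp (- c * t))"
proof -
  interpret prob_space P using assms(1) by (simp add: std_bm_def)
  have "U1 P B dpsi lam u t x \<le> ennreal (exp (- c * t)) * emeasure P {\<omega>\<in>space P. B t \<omega> \<le> x}"
    using assms by (rule U1_le_exp_emeasure)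
  also have "\<dots> \<le> ennreal (exp (- c * t)) * 1"
    by (intro mult_left_mono emeasure_le_1) simp
  finally show ?thesis by simp
qed

lemma U1_le_normal_tail:
  assumes "std_bm P B" and "0 < t" and "x < 0" and "\<And>s z. ennreal c \<le> rate dpsi lam (u s z)"
  shows "U1 P B dpsi lam u t x \<le> ennreal (exp (- c * t) * (t / (- x) * normal_density 0 (sqrt t) x))"
proof -
  have "U1 P B dpsi lam u t x \<le> ennreal (exp (- c * t)) * emeasure P {\<omega>\<in>space P. B t \<omega> \<le> x}"
    using assms(1) _ assms(4) by (rule U1_le_exp_emeasure) (use assms(2) in simp)
  also have "\<dots> \<le> ennreal (exp (- c * t)) * ennreal (t / (- x) * normal_density 0 (sqrt t) x)"
    using nn_integral_normal_density_lower_tail_le[of "sqrt t" x] assms(2,3)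
    by (intro mult_left_mono) (simp_all add: std_bm_emeasure_le_eq[OF assms(1,2)])
  also have "\<dots> = ennreal (exp (- c * t) * (t / (- x) * normal_density 0 (sqrt t) x))"
    by (rule ennreal_mult'[symmetric]) simp
  finally show ?thesis .
qed

lemma exp_mult_normal_tail_eq:
  fixes \<alpha> \<delta> t q :: real
  assumes "0 < \<alpha>" and "\<delta> < 0" and "0 < t"
  shows "exp (- q * t) * (t / (- (sqrt (2 * \<alpha>) * \<delta> * t)) * normal_density 0 (sqrt t) (sqrt (2 * \<alpha>) * \<delta> * t))
    = 1 / (2 * sqrt (pi * \<alpha>) * \<bar>\<delta>\<bar>) * t powr (-1/2) * exp (- (q + \<alpha> * \<delta>\<^sup>2) * t)"
proof -
  have "(sqrt (2 * \<alpha>) * \<delta> * t)\<^sup>2 / (2 * t) = \<alpha> * \<delta>\<^sup>2 * t"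
    using assms by (simp add: power_mult_distrib power2_eq_square)
  then have "normal_density 0 (sqrt t) (sqrt (2 * \<alpha>) * \<delta> * t) = 1 / sqrt (2 * pi * t) * exp (- \<alpha> * \<delta>\<^sup>2 * t)"
    using assms by (simp add: normal_density_def)
  moreover have "t / (- (sqrt (2 * \<alpha>) * \<delta> * t)) = 1 / (sqrt (2 * \<alpha>) * \<bar>\<delta>\<bar>)"
    using assms by (simp add: abs_if)
  moreover have "sqrt (2 * \<alpha>) * sqrt (2 * pi * t) = 2 * sqrt (pi * \<alpha>) * sqrt t"
    by (simp add: real_sqrt_mult[symmetric] mult_ac) (simp add: real_sqrt_mult)
  moreover have "t powr (-1/2) = 1 / sqrt t"
    using assms(3) by (simp add: powr_minus_divide powr_half_sqrt)
  moreover have "exp (- (q + \<alpha> * \<delta>\<^sup>2) * t) = exp (- q * t) * exp (- \<alpha> * \<delta>\<^sup>2 * t)"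
    by (simp add: exp_add[symmetric] algebra_simps)
  ultimately show ?thesis by (simp add: mult_ac)
qed

theorem lemma3p1:
  fixes \<alpha> \<beta> lam t \<delta> :: real and n :: "real measure"
    and P :: "'w measure" and B :: "real \<Rightarrow> 'w \<Rightarrow> real"
    and Ps :: "'v measure" and X :: "real \<Rightarrow> 'v \<Rightarrow> real measure"
    and f :: "real \<Rightarrow> real"
  assumes "\<alpha> > 0" and "\<beta> \<ge> 0"
    and "sets n = sets borel" and "sigma_finite_measure n" and "emeasure n {..0} = 0"
    and "(\<integral>\<^sup>+ y\<in>{0<..}. ennreal (min (y\<^sup>2) y) \<partial>n) < \<infinity>"
    and "filterlim (psi \<alpha> \<beta> n) at_top at_top"
    and "lam > 0" and "psi \<alpha> \<beta> n lam = 0" and "\<forall>l>lam. psi \<alpha> \<beta> n l \<noteq> 0"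
    and "std_bm P B"
    and "prob_space Ps"
    and "\<forall>s \<omega>. \<omega> \<in> space Ps \<longrightarrow> finite_measure (X s \<omega>) \<and> sets (X s \<omega>) = sets borel"
    and "f \<in> borel_measurable borel" and "\<forall>y. 0 \<le> f y"
    and "t > 0"
  shows "U1 P B (deriv (psi \<alpha> \<beta> n)) lam (ustar Ps X f) t (sqrt (2 * \<alpha>) * \<delta> * t)
     \<le> ennreal (if \<delta> \<ge> 0 then exp (- deriv (psi \<alpha> \<beta> n) lam * t)
         else 1 / (2 * sqrt (pi * \<alpha>) * \<bar>\<delta>\<bar>) * t powr (-1/2)
              * exp (- (deriv (psi \<alpha> \<beta> n) lam + \<alpha> * \<delta>\<^sup>2) * t))"
proof -
  interpret levy_measure n using assms(3,6) by unfold_locales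
  define q where "q = deriv (psi \<alpha> \<beta> n) lam"
  define x where "x = sqrt (2 * \<alpha>) * \<delta> * t"
  have rate_ge: "ennreal q \<le> rate (deriv (psi \<alpha> \<beta> n)) lam (ustar Ps X f s z)" for s z
    unfolding q_def using assms(2,8,12) by (intro ennreal_le_rate ustar_nonneg deriv_psi_mono) auto
  show ?thesis
  proof (cases "\<delta> \<ge> 0")
    case True
    then show ?thesis using U1_le_exp[OF assms(11) _ rate_ge] assms(16) by (simp add: q_def)
  next
    case False
    then have "\<delta> < 0" and "x < 0" using assms(1,16) by (simp_all add: x_def mult_neg_pos mult_pos_neg)
    have "U1 P B (deriv (psi \<alpha> \<beta> n)) lam (ustar Ps X f) t x
        \<le> ennreal (exp (- q * t) * (t / (- x) * normal_density 0 (sqrt t) x))"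
      using assms(11,16) \<open>x < 0\<close> rate_ge by (rule U1_le_normal_tail)
    also have "\<dots> = ennreal (1 / (2 * sqrt (pi * \<alpha>) * \<bar>\<delta>\<bar>) * t powr (-1/2)
        * exp (- (q + \<alpha> * \<delta>\<^sup>2) * t))"
      unfolding x_def exp_mult_normal_tail_eq[OF assms(1) \<open>\<delta> < 0\<close> assms(16)] ..
    finally show ?thesis using False unfolding x_def q_def by simp
  qed
qed

end
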